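(* Let $R(n)$ be the range of $n$ steps of simple symmetric random walk on $\mathbb{Z}^d$ started at $0$. There exist constants $c_d>0$ such that for all integers $n\ge 2$, $$\mathbb{E}\big[|\partial R(n)|\big]\ge \begin{cases} c_2\,\dfrac{n}{\log^2 n}, & d=2,\\[2mm] c_d\, n, & d\ge 3.\end{cases}$$
   Context: The range is $R(n)=\{S(0),\ldots,S(n)\}$. The inner boundary of $A\subset\mathbb{Z}^d$ is $\partial A=\{z\in A : z \text{ is at graph distance } 1 \text{ from some vertex of } \mathbb{Z}^d\setminus A\}$. *)

theory Defs
  imports Complex_Main
begin

text \<open>Points of Z^d are represented as functions nat => int vanishing outside {..<d}.\<close>

definition lattice :: "nat \<Rightarrow> (nat \<Rightarrow> int) set" where
  "lattice d = {x. \<forall>j\<ge>d. x j = 0}"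

definition adjacent :: "nat \<Rightarrow> (nat \<Rightarrow> int) \<Rightarrow> (nat \<Rightarrow> int) \<Rightarrow> bool" where
  "adjacent d x y \<longleftrightarrow> x \<in> lattice d \<and> y \<in> lattice d \<and> (\<Sum>j<d. \<bar>x j - y j\<bar>) = 1"

definition inner_boundary :: "nat \<Rightarrow> (nat \<Rightarrow> int) set \<Rightarrow> (nat \<Rightarrow> int) set" where
  "inner_boundary d A = {z \<in> A. \<exists>y \<in> lattice d - A. adjacent d z y}"

definition unit_steps :: "nat \<Rightarrow> (nat \<Rightarrow> int) set" where
  "unit_steps d = {(\<lambda>j. if j = i then s else 0) | i s. i < d \<and> (s = 1 \<or> s = -1)}"

definition walk_pos :: "(nat \<Rightarrow> int) list \<Rightarrow> nat \<Rightarrow> (nat \<Rightarrow> int)" where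
  "walk_pos xs k = (\<lambda>j. \<Sum>i<k. (xs ! i) j)"

definition walk_range :: "(nat \<Rightarrow> int) list \<Rightarrow> nat \<Rightarrow> (nat \<Rightarrow> int) set" where
  "walk_range xs n = walk_pos xs ` {0..n}"

text \<open>All step sequences of length n; under simple symmetric random walk each has
  probability (2d)^(-n), i.e. the law of the first n increments is uniform on this set.\<close>
definition step_seqs :: "nat \<Rightarrow> nat \<Rightarrow> (nat \<Rightarrow> int) list set" where
  "step_seqs d n = {xs. length xs = n \<and> set xs \<subseteq> unit_steps d}"

definition expected_boundary :: "nat \<Rightarrow> nat \<Rightarrow> real" where
  "expected_boundary d n =
     (\<Sum>xs\<in>step_seqs d n. real (card (inner_boundary d (walk_range xs n)))) / (2 * real d) ^ n"

end

theory Submission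
  imports Defs "HOL-Library.Function_Algebras" "HOL-Analysis.Harmonic_Numbers"
begin

(* Write f(m) for the probability that the walk avoids the two sites 0 and e0 = (1,0,...,0)
   at all times 1..m ("escape probability").
   (1) Boundary bound.  If at time k the walk sits at S(k), has never visited S(k) + e0 and
       never comes back to S(k) or S(k) + e0 before time n, then S(k) is an inner boundary
       point, and distinct such k give distinct points.  Splitting the walk at k and reversing
       the first piece, the number of such (walk, k) pairs is at least esc(k) * esc(n - k),
       so E|dR(n)| >= sum_k f(k) f(n - k) >= (n + 1) f(n)^2.
   (2) Last-exit decomposition.  Cutting a walk at its last visit to {0, e0} before time M
       gives 1 <= sum_{j<=M} P_j f(M - j), with P_j = P(S_j = 0) + P(S_j = e0).
   (3) Local bounds.  Counting lattice paths through binomial convolutions over the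
       coordinates gives P(S_j = x) <= d/(j + 1) for d >= 2 and <= 2 d^(3/2)/(j + 1)^(3/2)
       for d >= 3.
   (4) Combining (2) and (3) with M = (4d + 1) m yields f(m) >= 1/(56 log m) for d = 2 and
       f(m) >= c_d for d >= 3; inserted into (1) this is the theorem. *)

lemma walk_pos_0 [simp]: "walk_pos xs 0 = 0"
  by (rule ext) (simp add: walk_pos_def)

lemma walk_pos_Suc: "walk_pos xs (Suc k) = walk_pos xs k + xs ! k"
  by (rule ext) (simp add: walk_pos_def)

lemma walk_pos_append_left: "i \<le> length ys \<Longrightarrow> walk_pos (ys @ zs) i = walk_pos ys i"
  by (rule ext) (auto simp add: walk_pos_def nth_append intro!: sum.cong)

lemma walk_pos_append_right:
  "walk_pos (ys @ zs) (length ys + i) = walk_pos ys (length ys) + walk_pos zs i"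
proof (induction i)
  case 0
  then show ?case by (simp add: walk_pos_append_left)
next
  case (Suc i)
  then show ?case
    by (simp add: walk_pos_Suc[of "ys @ zs" "length ys + i", simplified] walk_pos_Suc[of zs i]
        nth_append add.assoc)
qed

lemma walk_pos_Cons: "walk_pos (y # ys) (Suc t) = y + walk_pos ys t"
proof (induction t)
  case 0
  then show ?case by (simp add: walk_pos_Suc)
next
  case (Suc t)
  then show ?case by (simp add: walk_pos_Suc[of "y # ys" "Suc t"] walk_pos_Suc[of ys t] add.assoc)
qed

lemma walk_pos_map:
  assumes "\<And>a b. h (a + b) = h a + h b" "h 0 = 0" "i \<le> length xs"
  shows "walk_pos (map h xs) i = h (walk_pos xs i)"
  using assms(3) by (induction i) (simp_all add: walk_pos_Suc assms(1,2))

lemma walk_pos_rev_uminus: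
  "i \<le> length ys \<Longrightarrow>
     walk_pos (rev (map uminus ys)) i = walk_pos ys (length ys - i) - walk_pos ys (length ys)"
proof (induction ys arbitrary: i)
  case Nil
  then show ?case by simp
next
  case (Cons y ys)
  show ?case
  proof (cases "i \<le> length ys")
    case True
    then have "walk_pos (rev (map uminus (y # ys))) i = walk_pos (rev (map uminus ys)) i"
      by (simp add: walk_pos_append_left)
    also have "\<dots> = walk_pos ys (length ys - i) - walk_pos ys (length ys)"
      by (rule Cons.IH[OF True])
    also have "\<dots> = walk_pos (y # ys) (length (y # ys) - i) - walk_pos (y # ys) (length (y # ys))"
      using True by (simp add: Suc_diff_le walk_pos_Cons)
    finally show ?thesis .
  next
    case False
    then have i: "i = length ys + 1" using Cons.prems by simp
    have "walk_pos (rev (map uminus (y # ys))) i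
        = walk_pos (rev (map uminus ys)) (length ys) + walk_pos [-y] 1"
      using walk_pos_append_right[of "rev (map uminus ys)" "[-y]" 1] i by simp
    also have "\<dots> = - walk_pos ys (length ys) - y"
      unfolding Cons.IH[of "length ys", OF order.refl] by (simp add: walk_pos_Suc)
    also have "\<dots> = walk_pos (y # ys) (length (y # ys) - i) - walk_pos (y # ys) (length (y # ys))"
      using i by (simp add: walk_pos_Cons)
    finally show ?thesis .
  qed
qed

definition unit_vec :: "nat \<Rightarrow> int \<Rightarrow> nat \<Rightarrow> int" where
  "unit_vec i s = (\<lambda>j. if j = i then s else 0)"

definition units :: "nat set \<Rightarrow> (nat \<Rightarrow> int) set" where
  "units I = {unit_vec i s | i s. i \<in> I \<and> (s = 1 \<or> s = -1)}"

text \<open>The first unit vector; the walk's boundary points are detected in its direction.\<close>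
definition e0 :: "nat \<Rightarrow> int" where
  "e0 = unit_vec 0 1"

lemma e0_nonzero [simp]: "e0 \<noteq> 0"
  by (simp add: e0_def unit_vec_def fun_eq_iff)

lemma unit_steps_eq_units: "unit_steps d = units {..<d}"
  by (simp add: unit_steps_def units_def unit_vec_def)

lemma unit_vec_inject:
  assumes "unit_vec i s = unit_vec i' s'" "s \<noteq> 0"
  shows "i = i' \<and> s = s'"
  using fun_cong[OF assms(1), of i] assms(2) by (auto simp: unit_vec_def split: if_splits)

lemma units_eq_image: "units I = (\<lambda>(i, s). unit_vec i s) ` (I \<times> {1, -1})"
  unfolding units_def by auto

lemma finite_units: "finite I \<Longrightarrow> finite (units I)"
  by (simp add: units_eq_image)

lemma card_units: "card (units I) = 2 * card I"
proof -
  have "inj_on (\<lambda>(i, s). unit_vec i s) (I \<times> {1, -1})"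
    by (rule inj_onI) (auto dest: unit_vec_inject)
  then have "card (units I) = card (I \<times> {1, -1 :: int})"
    unfolding units_eq_image by (rule card_image)
  then show ?thesis by (cases "finite I") (simp_all add: card_cartesian_product)
qed

lemma units_zero_outside: "u \<in> units J \<Longrightarrow> i \<notin> J \<Longrightarrow> u i = 0"
  unfolding units_def unit_vec_def by auto

lemma units_Un: "units (I \<union> J) = units I \<union> units J"
  unfolding units_def by blast

lemma units_disjoint:
  assumes "I \<inter> J = {}"
  shows "units I \<inter> units J = {}"
proof -
  have "u \<notin> units J" if u: "u \<in> units I" for u
  proof -
    obtain i s where "u = unit_vec i s" "i \<in> I" "s = 1 \<or> s = -1"
      using u unfolding units_def by blast
    with assms show ?thesis by (auto simp: unit_vec_def dest: units_zero_outside)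
  qed
  then show ?thesis by blast
qed

lemma units_single: "units {i} = {unit_vec i 1, unit_vec i (-1)}"
  unfolding units_def by auto

lemma sum_units_single: "(\<Sum>u\<in>units {i}. f u) = f (unit_vec i 1) + f (unit_vec i (-1))"
proof -
  have "unit_vec i 1 \<noteq> unit_vec i (-1)" using unit_vec_inject by fastforce
  then show ?thesis unfolding units_single by simp
qed

lemma uminus_units: "u \<in> units I \<Longrightarrow> - u \<in> units I"
  unfolding units_def unit_vec_def by (force simp: fun_eq_iff)

lemma finite_step_seqs: "finite (step_seqs d m)"
  unfolding step_seqs_def unit_steps_eq_units
  using finite_lists_length_eq[OF finite_units[of "{..<d}"]] by (simp add: conj_commute)

lemma card_step_seqs: "card (step_seqs d m) = (2 * d) ^ m"
  unfolding step_seqs_def unit_steps_eq_units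
  using card_lists_length_eq[OF finite_units[of "{..<d}"], of m] card_units[of "{..<d}"]
  by (simp add: conj_commute)

lemma step_seqs_append: "ys \<in> step_seqs d k \<Longrightarrow> zs \<in> step_seqs d l \<Longrightarrow> ys @ zs \<in> step_seqs d (k + l)"
  unfolding step_seqs_def by auto

lemma step_seqs_take: "xs \<in> step_seqs d n \<Longrightarrow> k \<le> n \<Longrightarrow> take k xs \<in> step_seqs d k"
  unfolding step_seqs_def by (auto dest: in_set_takeD)

lemma step_seqs_drop: "xs \<in> step_seqs d n \<Longrightarrow> drop k xs \<in> step_seqs d (n - k)"
  unfolding step_seqs_def by (auto dest: in_set_dropD)

lemma step_seqs_uminus: "ys \<in> step_seqs d k \<Longrightarrow> map uminus ys \<in> step_seqs d k"
  unfolding step_seqs_def unit_steps_eq_units by (auto intro: uminus_units)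

lemma step_seqs_rev_uminus: "ys \<in> step_seqs d k \<Longrightarrow> rev (map uminus ys) \<in> step_seqs d k"
  using step_seqs_uminus[of ys d k] by (simp add: step_seqs_def)

lemma card_append_image:
  assumes "A \<subseteq> step_seqs d k" "finite B"
  shows "card ((\<lambda>(ys, zs). ys @ zs) ` (A \<times> B)) = card A * card B"
proof -
  have "inj_on (\<lambda>(ys, zs). ys @ zs) (A \<times> B)"
  proof (rule inj_onI, clarify)
    fix ys zs ys' zs' assume "ys \<in> A" "ys' \<in> A" "ys @ zs = ys' @ zs'"
    moreover from \<open>ys \<in> A\<close> \<open>ys' \<in> A\<close> have "length ys = length ys'"
      using assms(1) by (auto simp: step_seqs_def)
    ultimately show "ys = ys' \<and> zs = zs'" by (simp add: append_eq_append_conv)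
  qed
  then show ?thesis by (simp add: card_image card_cartesian_product)
qed

lemma walk_pos_lattice:
  assumes "set xs \<subseteq> unit_steps d" "i \<le> length xs"
  shows "walk_pos xs i \<in> lattice d"
  using assms(2)
proof (induction i)
  case 0
  then show ?case by (simp add: lattice_def)
next
  case (Suc i)
  have "xs ! i \<in> units {..<d}" using assms(1) Suc.prems unfolding unit_steps_eq_units by auto
  then have "\<forall>j\<ge>d. (xs ! i) j = 0" by (auto intro: units_zero_outside)
  with Suc show ?case by (simp add: lattice_def walk_pos_Suc)
qed

section \<open>Escaping from the pair \<open>{0, e0}\<close>\<close>

definition escape_seqs :: "nat \<Rightarrow> nat \<Rightarrow> (nat \<Rightarrow> int) \<Rightarrow> (nat \<Rightarrow> int) list set" where
  "escape_seqs d m a =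
     {zs \<in> step_seqs d m. \<forall>i\<in>{1..m}. a + walk_pos zs i \<noteq> 0 \<and> a + walk_pos zs i \<noteq> e0}"

definition escape_count :: "nat \<Rightarrow> nat \<Rightarrow> nat" where
  "escape_count d m = card (escape_seqs d m 0)"

definition hit_seqs :: "nat \<Rightarrow> nat \<Rightarrow> (nat \<Rightarrow> int) \<Rightarrow> (nat \<Rightarrow> int) list set" where
  "hit_seqs d j x = {ws \<in> step_seqs d j. walk_pos ws j = x}"

definition hit_count :: "nat \<Rightarrow> nat \<Rightarrow> (nat \<Rightarrow> int) \<Rightarrow> nat" where
  "hit_count d j x = card (hit_seqs d j x)"

lemma finite_escape_seqs: "finite (escape_seqs d m a)"
  unfolding escape_seqs_def using finite_step_seqs by simp

lemma finite_hit_seqs: "finite (hit_seqs d m x)"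
  unfolding hit_seqs_def using finite_step_seqs by simp

lemma escape_seqs_step_seqs: "escape_seqs d m a \<subseteq> step_seqs d m"
  unfolding escape_seqs_def by blast

lemma walk_pos_uminus: "i \<le> length zs \<Longrightarrow> walk_pos (map uminus zs) i = - walk_pos zs i"
  by (rule walk_pos_map) simp_all

text \<open>Escaping from the start \<open>e0\<close> is no more likely than from \<open>0\<close>: negating all steps turns
  an escape from \<open>e0\<close> into an escape from \<open>0\<close>.\<close>
lemma card_escape_seqs_e0: "card (escape_seqs d m e0) \<le> escape_count d m"
proof -
  have "inj_on (map uminus) (escape_seqs d m e0)"
    by (rule inj_on_subset[of _ UNIV]) (simp_all add: inj_mapI)
  moreover have "map uminus ` escape_seqs d m e0 \<subseteq> escape_seqs d m 0"
  proof
    fix ys assume "ys \<in> map uminus ` escape_seqs d m e0"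
    then obtain zs where ys: "ys = map uminus zs" and zs: "zs \<in> escape_seqs d m e0" by blast
    then have len: "length zs = m" by (simp add: escape_seqs_def step_seqs_def)
    have "ys \<in> step_seqs d m"
      unfolding ys using zs escape_seqs_step_seqs by (blast intro: step_seqs_uminus)
    moreover have "walk_pos ys i \<noteq> 0 \<and> walk_pos ys i \<noteq> e0" if "i \<in> {1..m}" for i
    proof -
      have avoid: "e0 + walk_pos zs i \<noteq> 0" "e0 + walk_pos zs i \<noteq> e0"
        using zs that by (auto simp: escape_seqs_def)
      have ys_i: "walk_pos ys i = - walk_pos zs i"
        unfolding ys using that len by (simp add: walk_pos_uminus)
      have "- walk_pos zs i \<noteq> e0"
      proof
        assume "- walk_pos zs i = e0"
        then have "e0 + walk_pos zs i = - walk_pos zs i + walk_pos zs i" by simp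
        with avoid(1) show False by simp
      qed
      moreover have "- walk_pos zs i \<noteq> 0" using avoid(2) by simp
      ultimately show ?thesis unfolding ys_i by blast
    qed
    ultimately show "ys \<in> escape_seqs d m 0" by (simp add: escape_seqs_def)
  qed
  ultimately show ?thesis
    unfolding escape_count_def
    by (intro card_inj_on_le finite_escape_seqs)
qed

text \<open>A walk escaping for \<open>m + t\<close> steps escapes for its first \<open>m\<close> steps.\<close>
lemma escape_count_mono: "escape_count d (m + t) \<le> (2 * d) ^ t * escape_count d m"
proof -
  let ?split = "\<lambda>zs. (take m zs, drop m zs)"
  have "inj_on ?split (escape_seqs d (m + t) 0)"
    by (rule inj_onI) (metis append_take_drop_id prod.inject)
  moreover have "?split ` escape_seqs d (m + t) 0 \<subseteq> escape_seqs d m 0 \<times> step_seqs d t"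
  proof (rule image_subsetI)
    fix zs assume zs: "zs \<in> escape_seqs d (m + t) 0"
    then have zs_steps: "zs \<in> step_seqs d (m + t)" by (simp add: escape_seqs_def)
    have prefix: "take m zs \<in> step_seqs d m" by (rule step_seqs_take[OF zs_steps]) simp
    have "walk_pos (take m zs) i = walk_pos zs i" if "i \<le> m" for i
      using walk_pos_append_left[of i "take m zs" "drop m zs"] that zs_steps
      by (simp add: step_seqs_def)
    then have "take m zs \<in> escape_seqs d m 0"
      using zs prefix by (auto simp: escape_seqs_def)
    moreover have "drop m zs \<in> step_seqs d t" using step_seqs_drop[OF zs_steps, of m] by simp
    ultimately show "?split zs \<in> escape_seqs d m 0 \<times> step_seqs d t" by simp
  qed
  ultimately have "escape_count d (m + t) \<le> card (escape_seqs d m 0 \<times> step_seqs d t)"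
    unfolding escape_count_def
    by (intro card_inj_on_le) (simp_all add: finite_escape_seqs finite_step_seqs)
  then show ?thesis by (simp add: card_cartesian_product card_step_seqs escape_count_def mult.commute)
qed

section \<open>Counting boundary points along a single walk\<close>

definition good_times :: "(nat \<Rightarrow> int) list \<Rightarrow> nat \<Rightarrow> nat set" where
  "good_times xs n = {k \<in> {..n}. (\<forall>i\<le>k. walk_pos xs i \<noteq> walk_pos xs k + e0) \<and>
      (\<forall>i\<in>{k<..n}. walk_pos xs i \<noteq> walk_pos xs k \<and> walk_pos xs i \<noteq> walk_pos xs k + e0)}"

lemma adjacent_e0:
  assumes "d \<ge> 1" "z \<in> lattice d"
  shows "adjacent d z (z + e0)"
proof -
  have "(\<Sum>j<d. \<bar>e0 j\<bar>) = (\<Sum>j<d. if j = 0 then 1 else 0)"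
    by (rule sum.cong) (auto simp: e0_def unit_vec_def)
  also have "\<dots> = 1" using assms(1) by simp
  finally show ?thesis
    using assms unfolding adjacent_def lattice_def by (simp add: e0_def unit_vec_def)
qed

text \<open>Each good time yields a distinct inner boundary point of the range: \<open>S(k)\<close> itself, whose
  neighbour \<open>S(k) + e0\<close> lies outside the range.\<close>
lemma card_good_times_le_boundary:
  assumes d: "d \<ge> 1" and xs: "xs \<in> step_seqs d n"
  shows "card (good_times xs n) \<le> card (inner_boundary d (walk_range xs n))"
proof -
  let ?S = "walk_pos xs"
  have no_return: "?S i \<noteq> ?S k" if "k \<in> good_times xs n" "i \<in> good_times xs n" "k < i" for i k
    using that unfolding good_times_def by auto
  have "inj_on ?S (good_times xs n)"
    by (rule inj_onI) (metis linorder_neqE_nat no_return)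
  moreover have "?S ` good_times xs n \<subseteq> inner_boundary d (walk_range xs n)"
  proof
    fix z assume "z \<in> ?S ` good_times xs n"
    then obtain k where k: "k \<in> good_times xs n" and z: "z = ?S k" by blast
    have kn: "k \<le> n" using k by (simp add: good_times_def)
    have "z \<in> lattice d"
      unfolding z using xs kn by (intro walk_pos_lattice) (auto simp: step_seqs_def)
    moreover have "z + e0 \<notin> walk_range xs n"
    proof
      assume "z + e0 \<in> walk_range xs n"
      then obtain i where "i \<le> n" "z + e0 = ?S i" unfolding walk_range_def by auto
      then show False using k z unfolding good_times_def by (cases "i \<le> k") auto
    qed
    moreover have "z + e0 \<in> lattice d"
      using \<open>z \<in> lattice d\<close> d by (simp add: lattice_def e0_def unit_vec_def)
    moreover have "z \<in> walk_range xs n" unfolding walk_range_def z using kn by simp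
    ultimately show "z \<in> inner_boundary d (walk_range xs n)"
      unfolding inner_boundary_def using adjacent_e0[OF d] by blast
  qed
  moreover have "finite (inner_boundary d (walk_range xs n))"
    by (rule finite_subset[of _ "walk_range xs n"])
      (auto simp: inner_boundary_def walk_range_def)
  ultimately show ?thesis by (rule card_inj_on_le)
qed

lemma sum_card_fibres:
  assumes "finite A" "finite B" "\<And>x. x \<in> A \<Longrightarrow> P x \<subseteq> B"
  shows "(\<Sum>x\<in>A. card (P x)) = (\<Sum>y\<in>B. card {x \<in> A. y \<in> P x})"
proof -
  have "(\<Sum>x\<in>A. card (P x)) = (\<Sum>x\<in>A. \<Sum>y\<in>B. if y \<in> P x then 1 else 0)"
    using assms by (intro sum.cong refl) (simp add: sum.If_cases Int_absorb1)
  also have "\<dots> = (\<Sum>y\<in>B. \<Sum>x\<in>A. if y \<in> P x then 1 else 0)"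
    by (rule sum.swap)
  also have "\<dots> = (\<Sum>y\<in>B. card {x \<in> A. y \<in> P x})"
    using assms(1) by (simp add: sum.If_cases Int_def conj_commute)
  finally show ?thesis .
qed

lemma good_time_of_escapes:
  assumes ys: "ys \<in> escape_seqs d k 0" and zs: "zs \<in> escape_seqs d (n - k) 0" and kn: "k \<le> n"
  shows "rev (map uminus ys) @ zs \<in> step_seqs d n"
    and "k \<in> good_times (rev (map uminus ys) @ zs) n"
proof -
  let ?r = "rev (map uminus ys)"
  let ?x = "?r @ zs"
  have ys_steps: "ys \<in> step_seqs d k" and zs_steps: "zs \<in> step_seqs d (n - k)"
    using ys zs by (simp_all add: escape_seqs_def)
  then have len: "length ys = k" "length ?r = k" by (simp_all add: step_seqs_def)
  show "?x \<in> step_seqs d n"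
    using step_seqs_append[OF step_seqs_rev_uminus[OF ys_steps] zs_steps] kn by simp
  have past: "walk_pos ?x i = walk_pos ys (k - i) - walk_pos ys k" if "i \<le> k" for i
    using walk_pos_append_left[of i ?r zs] walk_pos_rev_uminus[of i ys] that len by simp
  have future: "walk_pos ?x (k + t) = walk_pos ?x k + walk_pos zs t" for t
    using walk_pos_append_right[of ?r zs t] len walk_pos_append_left[of k ?r zs] by simp
  have "walk_pos ?x i \<noteq> walk_pos ?x k + e0" if i: "i \<le> k" for i
  proof
    assume "walk_pos ?x i = walk_pos ?x k + e0"
    then have "walk_pos ys (k - i) = e0" using past[OF i] past[of k] by (simp add: algebra_simps)
    moreover have "k - i \<in> {1..k}" if "i \<noteq> k" using i that by auto
    ultimately show False using ys by (cases "i = k") (auto simp: escape_seqs_def)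
  qed
  moreover have "walk_pos ?x i \<noteq> walk_pos ?x k \<and> walk_pos ?x i \<noteq> walk_pos ?x k + e0"
    if i: "i \<in> {k<..n}" for i
  proof -
    have "i = k + (i - k)" "i - k \<in> {1..n - k}" using i by auto
    then show ?thesis using zs future[of "i - k"] by (auto simp: escape_seqs_def)
  qed
  ultimately show "k \<in> good_times ?x n" unfolding good_times_def using kn by simp
qed

lemma escape_product_le_good_walks:
  assumes kn: "k \<le> n"
  shows "escape_count d k * escape_count d (n - k) \<le> card {xs \<in> step_seqs d n. k \<in> good_times xs n}"
proof -
  let ?R = "(\<lambda>ys. rev (map uminus ys)) ` escape_seqs d k 0"
  have "inj_on (\<lambda>ys. rev (map uminus ys)) (escape_seqs d k 0)"
  proof (rule inj_onI)
    fix a b :: "(nat \<Rightarrow> int) list"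
    assume "rev (map uminus a) = rev (map uminus b)"
    then have "map uminus (map uminus a) = map uminus (map uminus b)" by simp
    then show "a = b" by (simp add: comp_def)
  qed
  then have "escape_count d k * escape_count d (n - k) = card ?R * card (escape_seqs d (n - k) 0)"
    unfolding escape_count_def by (simp add: card_image)
  also have "\<dots> = card ((\<lambda>(ys, zs). ys @ zs) ` (?R \<times> escape_seqs d (n - k) 0))"
    using escape_seqs_step_seqs step_seqs_rev_uminus
    by (intro card_append_image[symmetric, of _ d k] finite_escape_seqs) blast
  also have "\<dots> \<le> card {xs \<in> step_seqs d n. k \<in> good_times xs n}"
  proof (rule card_mono)
    show "finite {xs \<in> step_seqs d n. k \<in> good_times xs n}" by (simp add: finite_step_seqs)
    show "(\<lambda>(ys, zs). ys @ zs) ` (?R \<times> escape_seqs d (n - k) 0)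
        \<subseteq> {xs \<in> step_seqs d n. k \<in> good_times xs n}"
      using good_time_of_escapes[OF _ _ kn] by auto
  qed
  finally show ?thesis .
qed

lemma escape_convolution_le_boundary:
  assumes d: "d \<ge> 1"
  shows "(\<Sum>k\<le>n. escape_count d k * escape_count d (n - k)) \<le>
         (\<Sum>xs\<in>step_seqs d n. card (inner_boundary d (walk_range xs n)))"
proof -
  have "(\<Sum>k\<le>n. escape_count d k * escape_count d (n - k))
      \<le> (\<Sum>k\<le>n. card {xs \<in> step_seqs d n. k \<in> good_times xs n})"
    by (intro sum_mono escape_product_le_good_walks) simp
  also have "\<dots> = (\<Sum>xs\<in>step_seqs d n. card (good_times xs n))"
    by (rule sum_card_fibres[symmetric]) (auto simp: finite_step_seqs good_times_def)
  also have "\<dots> \<le> (\<Sum>xs\<in>step_seqs d n. card (inner_boundary d (walk_range xs n)))"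
    by (intro sum_mono card_good_times_le_boundary[OF d])
  finally show ?thesis .
qed

definition escape_prob :: "nat \<Rightarrow> nat \<Rightarrow> real" where
  "escape_prob d m = real (escape_count d m) / (2 * real d) ^ m"

definition visit_prob :: "nat \<Rightarrow> nat \<Rightarrow> real" where
  "visit_prob d j = (real (hit_count d j 0) + real (hit_count d j e0)) / (2 * real d) ^ j"

lemma escape_prob_nonneg: "escape_prob d m \<ge> 0"
  unfolding escape_prob_def by simp

lemma visit_prob_nonneg: "visit_prob d j \<ge> 0"
  unfolding visit_prob_def by simp

lemma escape_prob_le_1:
  assumes "d \<ge> 1"
  shows "escape_prob d m \<le> 1"
proof -
  have "escape_count d m \<le> card (step_seqs d m)"
    unfolding escape_count_def by (intro card_mono finite_step_seqs escape_seqs_step_seqs)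
  then have "real (escape_count d m) \<le> (2 * real d) ^ m"
    unfolding card_step_seqs by (metis of_nat_le_iff of_nat_mult of_nat_numeral of_nat_power)
  then show ?thesis unfolding escape_prob_def using assms by simp
qed

lemma escape_prob_antimono:
  assumes "d \<ge> 1" "m \<le> m'"
  shows "escape_prob d m' \<le> escape_prob d m"
proof -
  obtain t where t: "m' = m + t" using assms(2) le_Suc_ex by blast
  have "real (escape_count d (m + t)) \<le> (2 * real d) ^ t * real (escape_count d m)"
    using escape_count_mono[of d m t] by (metis of_nat_le_iff of_nat_mult of_nat_numeral of_nat_power)
  then have "real (escape_count d (m + t)) / (2 * real d) ^ (m + t)
      \<le> (2 * real d) ^ t * real (escape_count d m) / (2 * real d) ^ (m + t)"
    by (intro divide_right_mono) auto
  also have "\<dots> = escape_prob d m"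
    unfolding escape_prob_def using assms(1) by (simp add: power_add)
  finally show ?thesis unfolding escape_prob_def t .
qed

lemma power_split: "j \<le> M \<Longrightarrow> (x :: real) ^ M = x ^ j * x ^ (M - j)"
  by (simp add: power_add[symmetric])

lemma expected_boundary_ge_escape:
  assumes d: "d \<ge> 1"
  shows "(real n + 1) * (escape_prob d n)^2 \<le> expected_boundary d n"
proof -
  let ?N = "2 * real d"
  have "(real n + 1) * (escape_prob d n)^2 = (\<Sum>k\<le>n. escape_prob d n * escape_prob d n)"
    by (simp add: power2_eq_square)
  also have "\<dots> \<le> (\<Sum>k\<le>n. escape_prob d k * escape_prob d (n - k))"
    by (intro sum_mono mult_mono escape_prob_antimono[OF d] escape_prob_nonneg) simp_all
  also have "\<dots> = real (\<Sum>k\<le>n. escape_count d k * escape_count d (n - k)) / ?N ^ n"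
    unfolding of_nat_sum sum_divide_distrib
    by (intro sum.cong refl) (simp add: escape_prob_def power_split[of _ n])
  also have "\<dots> \<le> real (\<Sum>xs\<in>step_seqs d n. card (inner_boundary d (walk_range xs n))) / ?N ^ n"
    by (intro divide_right_mono) (simp_all only: of_nat_le_iff escape_convolution_le_boundary[OF d], simp)
  also have "\<dots> = expected_boundary d n" unfolding expected_boundary_def by simp
  finally show ?thesis .
qed

section \<open>Last-exit decomposition\<close>

text \<open>Cut a walk of length \<open>M\<close> at its last visit \<open>L\<close> to \<open>{0, e0}\<close>: the first piece ends at
  \<open>a \<in> {0, e0}\<close> and the second piece, started at \<open>a\<close>, never returns to \<open>{0, e0}\<close>.\<close>
lemma last_exit_cover:
  "step_seqs d M \<subseteq> (\<Union>j\<le>M. \<Union>a\<in>{0, e0}.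
     (\<lambda>(ys, zs). ys @ zs) ` (hit_seqs d j a \<times> escape_seqs d (M - j) a))"
proof
  fix xs assume xs: "xs \<in> step_seqs d M"
  let ?J = "{j \<in> {..M}. walk_pos xs j \<in> {0, e0}}"
  define L where "L = Max ?J"
  have fin: "finite ?J" and "0 \<in> ?J" by simp_all
  then have L: "L \<in> ?J" unfolding L_def by (intro Max_in) auto
  have L_max: "\<And>j. j \<in> ?J \<Longrightarrow> j \<le> L" unfolding L_def using fin by simp
  define ys where "ys = take L xs"
  define zs where "zs = drop L xs"
  have LM: "L \<le> M" using L by simp
  have xs_eq: "xs = ys @ zs" unfolding ys_def zs_def by simp
  have len_ys: "length ys = L" unfolding ys_def using LM xs by (simp add: step_seqs_def)
  let ?a = "walk_pos xs L"
  have "ys \<in> step_seqs d L" unfolding ys_def by (rule step_seqs_take[OF xs LM])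
  moreover have "walk_pos ys L = ?a" using walk_pos_append_left[of L ys zs] len_ys xs_eq by simp
  ultimately have "ys \<in> hit_seqs d L ?a" by (simp add: hit_seqs_def)
  moreover have "zs \<in> escape_seqs d (M - L) ?a"
  proof -
    have "?a + walk_pos zs i \<notin> {0, e0}" if i: "i \<in> {1..M - L}" for i
    proof -
      have "walk_pos xs (L + i) = ?a + walk_pos zs i"
        unfolding xs_eq using walk_pos_append_right[of ys zs i] walk_pos_append_left[of L ys zs]
          len_ys by simp
      moreover have "L + i \<notin> ?J" using L_max[of "L + i"] i by auto
      ultimately show ?thesis using i by auto
    qed
    then show ?thesis unfolding zs_def escape_seqs_def using step_seqs_drop[OF xs] by auto
  qed
  ultimately show "xs \<in> (\<Union>j\<le>M. \<Union>a\<in>{0, e0}.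
      (\<lambda>(ys, zs). ys @ zs) ` (hit_seqs d j a \<times> escape_seqs d (M - j) a))"
    using L LM xs_eq by blast
qed

lemma last_exit_count:
  "(2 * d) ^ M \<le> (\<Sum>j\<le>M. (hit_count d j 0 + hit_count d j e0) * escape_count d (M - j))"
proof -
  let ?piece = "\<lambda>j a. (\<lambda>(ys, zs). ys @ zs) ` (hit_seqs d j a \<times> escape_seqs d (M - j) a)"
  have piece: "card (?piece j a) \<le> hit_count d j a * escape_count d (M - j)"
    if "a \<in> {0, e0}" for j a
  proof -
    have "card (?piece j a) = hit_count d j a * card (escape_seqs d (M - j) a)"
      unfolding hit_count_def
      by (intro card_append_image finite_escape_seqs) (auto simp: hit_seqs_def)
    also have "\<dots> \<le> hit_count d j a * escape_count d (M - j)"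
      using that card_escape_seqs_e0 by (auto simp: escape_count_def)
    finally show ?thesis .
  qed
  have "(2 * d) ^ M = card (step_seqs d M)" by (simp add: card_step_seqs)
  also have "\<dots> \<le> card (\<Union>j\<le>M. \<Union>a\<in>{0, e0}. ?piece j a)"
    by (intro card_mono last_exit_cover) (simp add: finite_hit_seqs finite_escape_seqs)
  also have "\<dots> \<le> (\<Sum>j\<le>M. card (\<Union>a\<in>{0, e0}. ?piece j a))"
    by (rule card_UN_le) simp
  also have "\<dots> \<le> (\<Sum>j\<le>M. \<Sum>a\<in>{0, e0}. card (?piece j a))"
    by (intro sum_mono card_UN_le) simp
  also have "\<dots> \<le> (\<Sum>j\<le>M. \<Sum>a\<in>{0, e0}. hit_count d j a * escape_count d (M - j))"
    by (intro sum_mono piece)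
  also have "\<dots> = (\<Sum>j\<le>M. (hit_count d j 0 + hit_count d j e0) * escape_count d (M - j))"
    by (simp add: algebra_simps)
  finally show ?thesis .
qed

lemma last_exit_decomposition:
  assumes d: "d \<ge> 1"
  shows "1 \<le> (\<Sum>j\<le>M. visit_prob d j * escape_prob d (M - j))"
proof -
  let ?N = "2 * real d"
  have "real ((2 * d) ^ M)
      \<le> real (\<Sum>j\<le>M. (hit_count d j 0 + hit_count d j e0) * escape_count d (M - j))"
    by (simp only: of_nat_le_iff last_exit_count)
  then have "?N ^ M \<le> (\<Sum>j\<le>M. (real (hit_count d j 0) + real (hit_count d j e0)) * real (escape_count d (M - j)))"
    by simp
  then have "1 \<le> (\<Sum>j\<le>M. (real (hit_count d j 0) + real (hit_count d j e0)) * real (escape_count d (M - j))) / ?N ^ M"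
    using d by simp
  also have "\<dots> = (\<Sum>j\<le>M. visit_prob d j * escape_prob d (M - j))"
    unfolding sum_divide_distrib
    by (intro sum.cong refl) (simp add: visit_prob_def escape_prob_def power_split[of _ M])
  finally show ?thesis .
qed

section \<open>Counting lattice paths coordinate by coordinate\<close>

text \<open>\<open>path_count I j x\<close> is the number of \<open>j\<close>-step paths from \<open>0\<close> with steps \<open>\<plusminus>e\<^sub>i\<close>, \<open>i \<in> I\<close>,
  whose end point agrees with \<open>x\<close> on the coordinates in \<open>I\<close>.\<close>
fun path_count :: "nat set \<Rightarrow> nat \<Rightarrow> (nat \<Rightarrow> int) \<Rightarrow> nat" where
  "path_count I 0 x = (if \<forall>i\<in>I. x i = 0 then 1 else 0)"
| "path_count I (Suc j) x = (\<Sum>u\<in>units I. path_count I j (x - u))"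

lemma path_count_local: "(\<And>i. i \<in> I \<Longrightarrow> x i = y i) \<Longrightarrow> path_count I m x = path_count I m y"
proof (induction m arbitrary: x y)
  case 0
  then show ?case by simp
next
  case (Suc m)
  show ?case unfolding path_count.simps
    by (rule sum.cong[OF refl], rule Suc.IH) (simp add: Suc.prems)
qed

lemma path_count_le_power: "finite I \<Longrightarrow> real (path_count I m x) \<le> (2 * real (card I)) ^ m"
proof (induction m arbitrary: x)
  case 0
  then show ?case by simp
next
  case (Suc m)
  have "real (path_count I (Suc m) x) \<le> (\<Sum>u\<in>units I. (2 * real (card I)) ^ m)"
    unfolding path_count.simps of_nat_sum by (intro sum_mono Suc.IH Suc.prems)
  also have "\<dots> = (2 * real (card I)) ^ Suc m" by (simp add: card_units)
  finally show ?case .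
qed

lemma hit_seqs_Suc_cover:
  "hit_seqs d (Suc j) x \<subseteq> (\<Union>u\<in>unit_steps d. (\<lambda>ws. ws @ [u]) ` hit_seqs d j (x - u))"
proof
  fix ws assume ws: "ws \<in> hit_seqs d (Suc j) x"
  then have len: "length ws = Suc j" and steps: "set ws \<subseteq> unit_steps d"
    by (auto simp: hit_seqs_def step_seqs_def)
  define u where "u = ws ! j"
  have ws_eq: "ws = take j ws @ [u]"
    using len unfolding u_def by (metis lessI take_Suc_conv_app_nth take_all_iff order_refl)
  have len_take: "length (take j ws) = j" using len by simp
  have "walk_pos (take j ws) j + u = x"
    using ws walk_pos_append_right[of "take j ws" "[u]" 1] ws_eq len_take
    by (simp add: hit_seqs_def walk_pos_Suc)
  moreover have "take j ws \<in> step_seqs d j"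
    using len_take steps by (auto simp: step_seqs_def dest: in_set_takeD)
  ultimately have "take j ws \<in> hit_seqs d j (x - u)" by (simp add: hit_seqs_def algebra_simps)
  moreover have "u \<in> unit_steps d" using steps len unfolding u_def by auto
  ultimately show "ws \<in> (\<Union>u\<in>unit_steps d. (\<lambda>ws. ws @ [u]) ` hit_seqs d j (x - u))"
    using ws_eq by blast
qed

text \<open>The walk counts dominate the path counts (they are in fact equal on the lattice).\<close>
lemma hit_count_le_path_count: "hit_count d j x \<le> path_count {..<d} j x"
proof (induction j arbitrary: x)
  case 0
  have "hit_seqs d 0 x \<subseteq> (if x = 0 then {[]} else {})"
    by (auto simp: hit_seqs_def step_seqs_def)
  then have bound: "hit_count d 0 x \<le> card (if x = 0 then {[]} else ({} :: (nat \<Rightarrow> int) list set))"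
    unfolding hit_count_def by (intro card_mono) auto
  show ?case
  proof (cases "x = 0")
    case True
    then have "hit_count d 0 x \<le> 1" using bound by (simp only: if_True) simp
    moreover have "path_count {..<d} 0 x = 1" using True by simp
    ultimately show ?thesis by simp
  next
    case False
    then show ?thesis using bound by simp
  qed
next
  case (Suc j)
  have "hit_count d (Suc j) x \<le> card (\<Union>u\<in>unit_steps d. (\<lambda>ws. ws @ [u]) ` hit_seqs d j (x - u))"
    unfolding hit_count_def using hit_seqs_Suc_cover[of d j x]
    by (intro card_mono) (simp_all add: unit_steps_eq_units finite_units finite_hit_seqs)
  also have "\<dots> \<le> (\<Sum>u\<in>unit_steps d. card ((\<lambda>ws. ws @ [u]) ` hit_seqs d j (x - u)))"
    unfolding unit_steps_eq_units by (intro card_UN_le finite_units) simp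
  also have "\<dots> \<le> (\<Sum>u\<in>unit_steps d. hit_count d j (x - u))"
    unfolding hit_count_def by (rule sum_mono) (rule card_image_le[OF finite_hit_seqs])
  also have "\<dots> \<le> (\<Sum>u\<in>unit_steps d. path_count {..<d} j (x - u))"
    by (rule sum_mono) (rule Suc.IH)
  also have "\<dots> = path_count {..<d} (Suc j) x" by (simp add: unit_steps_eq_units)
  finally show ?case .
qed

text \<open>Pascal's rule, in the form needed to split one extra step between two blocks.\<close>
lemma binomial_convolution_Suc:
  fixes h :: "nat \<Rightarrow> nat \<Rightarrow> nat"
  shows "(\<Sum>m\<le>Suc j. (Suc j choose m) * h m (Suc j - m)) =
         (\<Sum>m\<le>j. (j choose m) * h (Suc m) (j - m)) + (\<Sum>m\<le>j. (j choose m) * h m (Suc j - m))"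
proof -
  have "(\<Sum>m\<le>Suc j. (Suc j choose m) * h m (Suc j - m))
      = h 0 (Suc j) + (\<Sum>m\<le>j. (Suc j choose Suc m) * h (Suc m) (j - m))"
    by (subst sum.atMost_Suc_shift) simp
  also have "\<dots> = h 0 (Suc j) + (\<Sum>m\<le>j. (j choose m) * h (Suc m) (j - m))
                 + (\<Sum>m\<le>j. (j choose Suc m) * h (Suc m) (j - m))"
    by (simp add: sum.distrib algebra_simps)
  also have "h 0 (Suc j) + (\<Sum>m\<le>j. (j choose Suc m) * h (Suc m) (j - m))
           = (\<Sum>m\<le>j. (j choose m) * h m (Suc j - m))"
  proof (cases j)
    case 0
    then show ?thesis by simp
  next
    case (Suc j')
    have "(\<Sum>m\<le>j. (j choose m) * h m (Suc j - m))
        = h 0 (Suc j) + (\<Sum>m\<le>j'. (j choose Suc m) * h (Suc m) (j - m))"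
      unfolding Suc by (subst sum.atMost_Suc_shift) simp
    moreover have "(\<Sum>m\<le>j. (j choose Suc m) * h (Suc m) (j - m))
        = (\<Sum>m\<le>j'. (j choose Suc m) * h (Suc m) (j - m))"
      unfolding Suc by simp
    ultimately show ?thesis by simp
  qed
  ultimately show ?thesis by (simp add: algebra_simps)
qed

text \<open>Paths on disjoint coordinate blocks interleave: the count on \<open>I \<union> J\<close> is the binomial
  convolution of the counts on \<open>I\<close> and on \<open>J\<close>.\<close>
lemma path_count_convolution:
  assumes fin: "finite I" "finite J" and disj: "I \<inter> J = {}"
  shows "path_count (I \<union> J) j x = (\<Sum>m\<le>j. (j choose m) * path_count I m x * path_count J (j - m) x)"
proof (induction j arbitrary: x)
  case 0
  then show ?case by auto
next
  case (Suc j)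
  have stays_J: "path_count J l (x - u) = path_count J l x" if "u \<in> units I" for u l
    by (rule path_count_local) (use that units_zero_outside disj in auto)
  have stays_I: "path_count I l (x - u) = path_count I l x" if "u \<in> units J" for u l
    by (rule path_count_local) (use that units_zero_outside disj in auto)
  have "path_count (I \<union> J) (Suc j) x
      = (\<Sum>u\<in>units I. path_count (I \<union> J) j (x - u)) + (\<Sum>u\<in>units J. path_count (I \<union> J) j (x - u))"
    unfolding path_count.simps units_Un
    by (rule sum.union_disjoint) (simp_all add: finite_units fin units_disjoint[OF disj])
  also have "(\<Sum>u\<in>units I. path_count (I \<union> J) j (x - u))
      = (\<Sum>u\<in>units I. \<Sum>m\<le>j. (j choose m) * path_count I m (x - u) * path_count J (j - m) x)"
    by (intro sum.cong refl) (simp only: Suc.IH stays_J)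
  also have "\<dots> = (\<Sum>m\<le>j. \<Sum>u\<in>units I. (j choose m) * path_count I m (x - u) * path_count J (j - m) x)"
    by (rule sum.swap)
  also have "\<dots> = (\<Sum>m\<le>j. (j choose m) * path_count I (Suc m) x * path_count J (j - m) x)"
    by (simp add: sum_distrib_left sum_distrib_right)
  also have "(\<Sum>u\<in>units J. path_count (I \<union> J) j (x - u))
      = (\<Sum>u\<in>units J. \<Sum>m\<le>j. (j choose m) * path_count I m x * path_count J (j - m) (x - u))"
    by (intro sum.cong refl) (simp only: Suc.IH stays_I)
  also have "\<dots> = (\<Sum>m\<le>j. \<Sum>u\<in>units J. (j choose m) * path_count I m x * path_count J (j - m) (x - u))"
    by (rule sum.swap)
  also have "\<dots> = (\<Sum>m\<le>j. (j choose m) * path_count I m x * path_count J (Suc j - m) x)"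
    by (intro sum.cong refl) (simp add: sum_distrib_left Suc_diff_le)
  finally show ?case
    using binomial_convolution_Suc[of j "\<lambda>m l. path_count I m x * path_count J l x"]
    by (simp add: mult.assoc)
qed

lemma path_count_convolution_real:
  assumes "finite I" "finite J" "I \<inter> J = {}"
  shows "real (path_count (I \<union> J) j x)
       = (\<Sum>m\<le>j. real (j choose m) * real (path_count I m x) * real (path_count J (j - m) x))"
  unfolding path_count_convolution[OF assms] by simp

text \<open>Number of \<open>k\<close>-step \<open>\<plusminus>1\<close> paths on \<open>\<int>\<close> ending at \<open>y\<close>: choose the \<open>m\<close> up-steps, \<open>2m - k = y\<close>.\<close>
definition line_count :: "nat \<Rightarrow> int \<Rightarrow> nat" where
  "line_count k y = (\<Sum>m\<le>k. (k choose m) * (if 2 * int m - int k = y then 1 else 0))"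

lemma line_count_0: "line_count 0 y = (if y = 0 then 1 else 0)"
  by (simp add: line_count_def)

lemma line_count_Suc: "line_count (Suc k) y = line_count k (y - 1) + line_count k (y + 1)"
proof -
  have "line_count (Suc k) y
      = (\<Sum>m\<le>Suc k. (Suc k choose m) * (if int m - int (Suc k - m) = y then 1 else 0))"
    unfolding line_count_def by (rule sum.cong[OF refl]) (auto simp: of_nat_diff)
  also have "\<dots> = (\<Sum>m\<le>k. (k choose m) * (if int (Suc m) - int (k - m) = y then 1 else 0))
        + (\<Sum>m\<le>k. (k choose m) * (if int m - int (Suc k - m) = y then 1 else 0))"
    using binomial_convolution_Suc[of k "\<lambda>m l. if int m - int l = y then 1 else 0"] by simp
  also have "(\<Sum>m\<le>k. (k choose m) * (if int (Suc m) - int (k - m) = y then 1 else 0))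
      = line_count k (y - 1)"
    unfolding line_count_def by (rule sum.cong[OF refl]) (auto simp: of_nat_diff)
  also have "(\<Sum>m\<le>k. (k choose m) * (if int m - int (Suc k - m) = y then 1 else 0))
      = line_count k (y + 1)"
    unfolding line_count_def by (rule sum.cong[OF refl]) (auto simp: of_nat_diff)
  finally show ?thesis .
qed

text \<open>At most one summand is non-zero, and every binomial coefficient is at most the middle one.\<close>
lemma line_count_le: "line_count k y \<le> k choose (k div 2)"
proof -
  let ?P = "\<lambda>m. 2 * int m - int k = y"
  have "line_count k y \<le> (\<Sum>m\<le>k. (k choose (k div 2)) * (if ?P m then 1 else 0))"
    unfolding line_count_def by (rule sum_mono) (simp add: binomial_maximum)
  also have "\<dots> = (k choose (k div 2)) * card {m \<in> {..k}. ?P m}"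
    by (simp add: sum_distrib_left[symmetric] sum.If_cases Int_def conj_commute)
  also have "card {m \<in> {..k}. ?P m} \<le> 1"
  proof -
    have "\<forall>a\<in>{m \<in> {..k}. ?P m}. \<forall>b\<in>{m \<in> {..k}. ?P m}. a = b" by auto
    then show ?thesis using card_le_Suc0_iff_eq[of "{m \<in> {..k}. ?P m}"] by simp
  qed
  finally show ?thesis by simp
qed

lemma path_count_single: "path_count {i} k x = line_count k (x i)"
proof (induction k arbitrary: x)
  case 0
  then show ?case by (simp add: line_count_0)
next
  case (Suc k)
  have "path_count {i} (Suc k) x
      = line_count k ((x - unit_vec i 1) i) + line_count k ((x - unit_vec i (-1)) i)"
    by (simp only: path_count.simps sum_units_single Suc.IH)
  also have "\<dots> = line_count k (x i - 1) + line_count k (x i + 1)" by (simp add: unit_vec_def)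
  finally show ?case by (simp add: line_count_Suc)
qed

text \<open>In the rotated coordinates \<open>x\<^sub>i + x\<^sub>i\<^sub>'\<close>, \<open>x\<^sub>i - x\<^sub>i\<^sub>'\<close> a planar walk is a pair of
  independent walks on \<open>\<int>\<close>.\<close>
lemma path_count_pair:
  assumes "i \<noteq> i'"
  shows "path_count {i, i'} k x = line_count k (x i + x i') * line_count k (x i - x i')"
proof (induction k arbitrary: x)
  case 0
  then show ?case by (auto simp: line_count_0)
next
  case (Suc k)
  let ?L = "line_count k"
  define a where "a = x i + x i'"
  define b where "b = x i - x i'"
  have shift: "(x - unit_vec i s) i + (x - unit_vec i s) i' = a - s"
    "(x - unit_vec i s) i - (x - unit_vec i s) i' = b - s"
    "(x - unit_vec i' s) i + (x - unit_vec i' s) i' = a - s"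
    "(x - unit_vec i' s) i - (x - unit_vec i' s) i' = b + s" for s
    using assms by (simp_all add: unit_vec_def a_def b_def)
  have "path_count {i, i'} (Suc k) x
      = (\<Sum>u\<in>units {i}. path_count {i, i'} k (x - u)) + (\<Sum>u\<in>units {i'}. path_count {i, i'} k (x - u))"
    unfolding path_count.simps using units_Un[of "{i}" "{i'}"] units_disjoint[of "{i}" "{i'}"] assms
    by (simp add: insert_commute sum.union_disjoint finite_units)
  also have "\<dots> = ?L (a - 1) * ?L (b - 1) + ?L (a + 1) * ?L (b + 1)
      + (?L (a - 1) * ?L (b + 1) + ?L (a + 1) * ?L (b - 1))"
    by (simp only: sum_units_single Suc.IH shift) simp
  also have "\<dots> = line_count (Suc k) a * line_count (Suc k) b"
    by (simp add: line_count_Suc algebra_simps)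
  finally show ?case by (simp add: a_def b_def)
qed

lemma central_binomial_Suc:
  "real ((2 * Suc k) choose Suc k) * (k + 1) = 2 * (2 * k + 1) * real ((2 * k) choose k)"
proof -
  have r1: "Suc (2 * k) * ((2 * k) choose k) = (Suc (2 * k) choose Suc k) * Suc k"
    by (rule Suc_times_binomial_eq)
  have r2: "Suc (Suc (2 * k)) * (Suc (2 * k) choose k) = (Suc (Suc (2 * k)) choose Suc k) * Suc k"
    by (rule Suc_times_binomial_eq)
  have sym: "Suc (2 * k) choose k = Suc (2 * k) choose Suc k"
    using binomial_symmetric[of k "Suc (2 * k)"] by simp
  have "real ((2 * Suc k) choose Suc k) * (k + 1) = 2 * ((k + 1) * real (Suc (2 * k) choose Suc k))"
    using arg_cong[OF r2, of real] unfolding sym by (simp add: algebra_simps)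
  also have "(k + 1) * real (Suc (2 * k) choose Suc k) = (2 * k + 1) * real ((2 * k) choose k)"
    using arg_cong[OF r1, of real] by (simp add: algebra_simps)
  finally show ?thesis by (simp add: algebra_simps)
qed

lemma central_binomial_sq_bound: "real ((2 * k) choose k)^2 * (3 * real k + 1) \<le> 16 ^ k"
proof (induction k)
  case 0
  then show ?case by simp
next
  case (Suc k)
  define c where "c = real ((2 * k) choose k)"
  define c' where "c' = real ((2 * Suc k) choose Suc k)"
  define r where "r = real k"
  have r0: "r \<ge> 0" unfolding r_def by simp
  have ratio: "c' * (r + 1) = 2 * (2 * r + 1) * c"
    using central_binomial_Suc[of k] unfolding c_def c'_def r_def by simp
  have IH: "c^2 * (3 * r + 1) \<le> 16 ^ k" using Suc.IH unfolding c_def r_def .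
  have "(c' * (r + 1))^2 = (2 * (2 * r + 1) * c)^2" using ratio by simp
  then have "c'^2 * (r + 1)^2 = 4 * (2 * r + 1)^2 * c^2"
    by (simp add: power_mult_distrib power2_eq_square algebra_simps)
  then have "c'^2 * (3 * r + 4) * ((r + 1)^2 * (3 * r + 1))
      = 4 * (2 * r + 1)^2 * (3 * r + 4) * (c^2 * (3 * r + 1))"
    by (simp add: algebra_simps)
  also have "\<dots> \<le> 4 * (2 * r + 1)^2 * (3 * r + 4) * 16 ^ k"
    using IH r0 by (intro mult_left_mono) auto
  also have "\<dots> \<le> 16 * 16 ^ k * ((r + 1)^2 * (3 * r + 1))"
  proof -
    have "(2 * r + 1)^2 * (3 * r + 4) \<le> 4 * (r + 1)^2 * (3 * r + 1)"
      using r0 by (simp add: power2_eq_square algebra_simps)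
    then have "4 * ((2 * r + 1)^2 * (3 * r + 4)) * (16::real) ^ k \<le> 4 * (4 * (r + 1)^2 * (3 * r + 1)) * 16 ^ k"
      by (intro mult_right_mono[OF mult_left_mono]) auto
    then show ?thesis by (simp add: algebra_simps)
  qed
  finally have "c'^2 * (3 * r + 4) \<le> 16 * 16 ^ k"
    by (rule mult_right_le_imp_le) (use r0 in auto)
  then show ?case unfolding c'_def r_def by (simp add: algebra_simps)
qed

lemma middle_binomial_sq_bound: "real (k choose (k div 2))^2 * (real k + 1) \<le> 2 * 4 ^ k"
proof (cases "even k")
  case True
  then obtain t where k: "k = 2 * t" by blast
  have "real (k choose (k div 2))^2 * (real k + 1) = real ((2 * t) choose t)^2 * (2 * real t + 1)"
    unfolding k by simp
  also have "\<dots> \<le> real ((2 * t) choose t)^2 * (3 * real t + 1)"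
    by (intro mult_left_mono) auto
  also have "\<dots> \<le> 16 ^ t" by (rule central_binomial_sq_bound)
  also have "\<dots> = 4 ^ k" unfolding k by (simp add: power_mult)
  also have "\<dots> \<le> 2 * 4 ^ k" by simp
  finally show ?thesis .
next
  case False
  then obtain t where k: "k = 2 * t + 1" using oddE by blast
  have "Suc (2 * t) * ((2 * t) choose t) = (Suc (2 * t) choose Suc t) * Suc t"
    by (rule Suc_times_binomial_eq)
  moreover have "Suc (2 * t) choose t = Suc (2 * t) choose Suc t"
    using binomial_symmetric[of t "Suc (2 * t)"] by simp
  ultimately have "real (Suc (2 * t) choose t) * (real t + 1) = (2 * real t + 1) * real ((2 * t) choose t)"
    by (metis add.commute of_nat_Suc of_nat_mult mult_2 of_nat_add)
  also have "\<dots> \<le> (2 * real ((2 * t) choose t)) * (real t + 1)"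
    by (simp add: algebra_simps)
  finally have le2: "real (Suc (2 * t) choose t) \<le> 2 * real ((2 * t) choose t)"
    by (rule mult_right_le_imp_le) auto
  have "real (k choose (k div 2))^2 * (real k + 1) = real (Suc (2 * t) choose t)^2 * (2 * real t + 2)"
    unfolding k by simp
  also have "\<dots> \<le> (2 * real ((2 * t) choose t))^2 * (2 * (3 * real t + 1))"
    using le2 by (intro mult_mono power_mono) auto
  also have "\<dots> = 8 * (real ((2 * t) choose t)^2 * (3 * real t + 1))"
    by (simp add: power2_eq_square algebra_simps)
  also have "\<dots> \<le> 8 * 16 ^ t" using central_binomial_sq_bound[of t] by simp
  also have "\<dots> = 2 * 4 ^ k" unfolding k by (simp add: power_mult power_add)
  finally show ?thesis .
qed

lemma path_count_single_bound: "real (path_count {i} k x)^2 * (real k + 1) \<le> 2 * 4 ^ k"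
proof -
  have "real (path_count {i} k x)^2 * (real k + 1) \<le> real (k choose (k div 2))^2 * (real k + 1)"
    unfolding path_count_single using line_count_le by (intro mult_right_mono power_mono) auto
  also have "\<dots> \<le> 2 * 4 ^ k" by (rule middle_binomial_sq_bound)
  finally show ?thesis .
qed

lemma path_count_pair_bound:
  assumes "i \<noteq> i'"
  shows "real (path_count {i, i'} k x) * (real k + 1) \<le> 2 * 4 ^ k"
proof -
  have "real (path_count {i, i'} k x) \<le> real (k choose (k div 2))^2"
    unfolding path_count_pair[OF assms] power2_eq_square of_nat_mult[symmetric] of_nat_le_iff
    by (intro mult_mono line_count_le) auto
  then have "real (path_count {i, i'} k x) * (real k + 1) \<le> real (k choose (k div 2))^2 * (real k + 1)"
    by (intro mult_right_mono) auto
  also have "\<dots> \<le> 2 * 4 ^ k" by (rule middle_binomial_sq_bound)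
  finally show ?thesis .
qed

lemma binomial_sum_real: "(\<Sum>m\<le>j. real (j choose m) * a ^ m * b ^ (j - m)) = (a + b) ^ j"
  using binomial_ring[of a b j] by simp

lemma binomial_div_Suc: "real (j choose m) / (real m + 1) = real (Suc j choose Suc m) / (real j + 1)"
proof -
  have "real (Suc m) * real (Suc j choose Suc m) = real (Suc j) * real (j choose m)"
    unfolding of_nat_mult[symmetric] by (rule arg_cong[OF Suc_times_binomial])
  then show ?thesis by (simp add: field_simps)
qed

lemma sum_atMost_Suc_shift_le:
  fixes g :: "nat \<Rightarrow> real"
  assumes "\<And>k. g k \<ge> 0"
  shows "(\<Sum>m\<le>j. g (Suc m)) \<le> (\<Sum>k\<le>Suc j. g k)"
  using sum.atMost_Suc_shift[of g j] assms[of 0] by linarith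

text \<open>Weighting the binomial expansion of \<open>(a + b)\<^sup>j\<close> by \<open>1/(m + 1)\<close> gains a factor
  \<open>(a + b)/((j + 1) a)\<close>: this is the identity \<open>binom(j, m)/(m + 1) = binom(j + 1, m + 1)/(j + 1)\<close>.\<close>
lemma binomial_sum_div_Suc:
  fixes a b :: real
  assumes a: "a > 0" and b: "b \<ge> 0"
  shows "(\<Sum>m\<le>j. real (j choose m) * a ^ m * b ^ (j - m) / (real m + 1))
         \<le> (a + b) ^ (j + 1) / ((real j + 1) * a)"
proof -
  let ?g = "\<lambda>k. real (Suc j choose k) * a ^ k * b ^ (Suc j - k)"
  have cancel: "c / J * a ^ m * e = c * a ^ Suc m * e / (J * a)" for c J e m
    using a by (cases "J = 0") (simp_all add: field_simps)
  have "(\<Sum>m\<le>j. real (j choose m) * a ^ m * b ^ (j - m) / (real m + 1))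
      = (\<Sum>m\<le>j. ?g (Suc m)) / ((real j + 1) * a)"
    unfolding sum_divide_distrib
  proof (intro sum.cong refl)
    fix m
    have "real (j choose m) * a ^ m * b ^ (j - m) / (real m + 1)
        = real (j choose m) / (real m + 1) * a ^ m * b ^ (j - m)"
      by simp
    also have "\<dots> = real (Suc j choose Suc m) / (real j + 1) * a ^ m * b ^ (j - m)"
      by (simp only: binomial_div_Suc)
    also have "\<dots> = ?g (Suc m) / ((real j + 1) * a)"
      unfolding diff_Suc_Suc by (rule cancel)
    finally show "real (j choose m) * a ^ m * b ^ (j - m) / (real m + 1) = ?g (Suc m) / ((real j + 1) * a)" .
  qed
  also have "\<dots> \<le> (\<Sum>k\<le>Suc j. ?g k) / ((real j + 1) * a)"
    by (intro divide_right_mono sum_atMost_Suc_shift_le) (use a b in auto)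
  also have "(\<Sum>k\<le>Suc j. ?g k) = (a + b) ^ (j + 1)" using binomial_sum_real[of "Suc j" a b] by simp
  finally show ?thesis .
qed

lemma binomial_sum_div_Suc_rev:
  fixes a b :: real
  assumes a: "a \<ge> 0" and b: "b > 0"
  shows "(\<Sum>m\<le>j. real (j choose m) * a ^ m * b ^ (j - m) / (real (j - m) + 1))
         \<le> (a + b) ^ (j + 1) / ((real j + 1) * b)"
proof -
  have "(\<Sum>m\<le>j. real (j choose m) * a ^ m * b ^ (j - m) / (real (j - m) + 1))
      = (\<Sum>m\<le>j. real (j choose m) * b ^ m * a ^ (j - m) / (real m + 1))"
    unfolding atMost_atLeast0
    by (subst sum.atLeastAtMost_rev) (auto intro!: sum.cong simp: binomial_symmetric[symmetric])
  also have "\<dots> \<le> (b + a) ^ (j + 1) / ((real j + 1) * b)" by (rule binomial_sum_div_Suc[OF b a])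
  finally show ?thesis by (simp add: add.commute)
qed

text \<open>Applying the previous estimate twice handles the weight \<open>1/((m + 1)(m + 2))\<close>.\<close>
lemma binomial_sum_div_Suc2:
  fixes a b :: real
  assumes a: "a > 0" and b: "b \<ge> 0"
  shows "(\<Sum>m\<le>j. real (j choose m) * a ^ m * b ^ (j - m) / ((real m + 1) * (real m + 2)))
         \<le> (a + b) ^ (j + 2) / ((real j + 1) * (real j + 2) * a ^ 2)"
proof -
  let ?h = "\<lambda>k. real (Suc j choose k) * a ^ k * b ^ (Suc j - k) / (real k + 1)"
  have cancel: "c / J * a ^ m * e / K = c * a ^ Suc m * e / K / (J * a)" if "K \<noteq> 0" for c J e K m
    using a that by (cases "J = 0") (simp_all add: field_simps)
  have Suc_plus_1: "real (Suc m) + 1 = real m + 2" for m by simp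
  have "(\<Sum>m\<le>j. real (j choose m) * a ^ m * b ^ (j - m) / ((real m + 1) * (real m + 2)))
      = (\<Sum>m\<le>j. ?h (Suc m)) / ((real j + 1) * a)"
    unfolding sum_divide_distrib
  proof (intro sum.cong refl)
    fix m
    have "real (j choose m) * a ^ m * b ^ (j - m) / ((real m + 1) * (real m + 2))
        = real (j choose m) / (real m + 1) * a ^ m * b ^ (j - m) / (real m + 2)"
      by simp
    also have "\<dots> = real (Suc j choose Suc m) / (real j + 1) * a ^ m * b ^ (j - m) / (real m + 2)"
      by (simp only: binomial_div_Suc)
    also have "\<dots> = ?h (Suc m) / ((real j + 1) * a)"
      unfolding diff_Suc_Suc Suc_plus_1 by (rule cancel) simp
    finally show "real (j choose m) * a ^ m * b ^ (j - m) / ((real m + 1) * (real m + 2))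
        = ?h (Suc m) / ((real j + 1) * a)" .
  qed
  also have "\<dots> \<le> (\<Sum>k\<le>Suc j. ?h k) / ((real j + 1) * a)"
    by (intro divide_right_mono sum_atMost_Suc_shift_le) (use a b in auto)
  also have "\<dots> \<le> ((a + b) ^ (Suc j + 1) / ((real (Suc j) + 1) * a)) / ((real j + 1) * a)"
    by (intro divide_right_mono binomial_sum_div_Suc[OF a b]) (use a in auto)
  also have "\<dots> = (a + b) ^ (j + 2) / ((real j + 1) * (real j + 2) * a ^ 2)"
    by (simp add: field_simps power2_eq_square)
  finally show ?thesis .
qed

lemma weighted_Cauchy_Schwarz:
  fixes w f g :: "'a \<Rightarrow> real"
  assumes "\<And>i. i \<in> A \<Longrightarrow> w i \<ge> 0"
  shows "(\<Sum>i\<in>A. w i * f i * g i)^2 \<le> (\<Sum>i\<in>A. w i * (f i)^2) * (\<Sum>i\<in>A. w i * (g i)^2)"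
proof -
  have "(\<Sum>i\<in>A. w i * f i * g i) = (\<Sum>i\<in>A. (sqrt (w i) * f i) * (sqrt (w i) * g i))"
    by (rule sum.cong[OF refl]) (use assms in \<open>simp add: algebra_simps real_sqrt_mult_self\<close>)
  moreover have "(\<Sum>i\<in>A. w i * (f i)^2) = (\<Sum>i\<in>A. (sqrt (w i) * f i)^2)"
    by (rule sum.cong[OF refl]) (use assms in \<open>simp add: power_mult_distrib\<close>)
  moreover have "(\<Sum>i\<in>A. w i * (g i)^2) = (\<Sum>i\<in>A. (sqrt (w i) * g i)^2)"
    by (rule sum.cong[OF refl]) (use assms in \<open>simp add: power_mult_distrib\<close>)
  ultimately show ?thesis using Cauchy_Schwarz_ineq_sum by simp
qed

section \<open>Local bounds for path counts\<close>

lemma path_count_le_block: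
  assumes "finite I" "A \<subseteq> I"
  shows "real (path_count I j x)
       \<le> (\<Sum>m\<le>j. real (j choose m) * real (path_count A m x) * (2 * real (card (I - A))) ^ (j - m))"
proof -
  have "real (path_count (A \<union> (I - A)) j x)
      = (\<Sum>m\<le>j. real (j choose m) * real (path_count A m x) * real (path_count (I - A) (j - m) x))"
    by (rule path_count_convolution_real) (use assms finite_subset in auto)
  moreover have "A \<union> (I - A) = I" using assms(2) by blast
  ultimately have "real (path_count I j x)
      = (\<Sum>m\<le>j. real (j choose m) * real (path_count A m x) * real (path_count (I - A) (j - m) x))"
    by simp
  also have "\<dots> \<le> (\<Sum>m\<le>j. real (j choose m) * real (path_count A m x) * (2 * real (card (I - A))) ^ (j - m))"
    by (intro sum_mono mult_left_mono path_count_le_power) (use assms(1) in auto)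
  finally show ?thesis .
qed

lemma card_Diff_real:
  assumes "finite I" "A \<subseteq> I"
  shows "real (card (I - A)) = real (card I) - real (card A)"
  using assms by (simp add: card_Diff_subset finite_subset of_nat_diff card_mono)

text \<open>One coordinate in \<open>I\<close> already gives \<open>path_count I l x \<le> (2|I|)\<^sup>l \<sqdot> O(l\<^sup>-\<^sup>1\<^sup>/\<^sup>2)\<close>;
  the square is bounded via Cauchy-Schwarz against the binomial weights.\<close>
lemma path_count_sq_bound:
  assumes fin: "finite I" and i: "i \<in> I"
  shows "real (path_count I l x)^2 * (real l + 1) \<le> (2 * real (card I)) ^ (2 * l + 1)"
proof -
  define c where "c = 2 * real (card (I - {i}))"
  have c0: "c \<ge> 0" unfolding c_def by simp
  have D: "2 + c = 2 * real (card I)" unfolding c_def using card_Diff_real[of I "{i}"] fin i by simp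
  define w where "w k = real (l choose k) * 2 ^ k * c ^ (l - k)" for k
  define f where "f k = real (path_count {i} k x) / 2 ^ k" for k
  have w0: "w k \<ge> 0" for k unfolding w_def using c0 by simp
  have f_sq: "w k * (f k)^2 \<le> w k * (2 / (real k + 1))" for k
  proof (rule mult_left_mono[OF _ w0])
    have "real (path_count {i} k x)^2 / 4 ^ k \<le> 2 / (real k + 1)"
      using path_count_single_bound[of i k x] by (simp add: field_simps)
    moreover have "(f k)^2 = real (path_count {i} k x)^2 / 4 ^ k"
      unfolding f_def by (simp add: power_divide power_mult[symmetric] mult.commute[of k 2] power_mult)
    ultimately show "(f k)^2 \<le> 2 / (real k + 1)" by simp
  qed
  have "real (path_count I l x) \<le> (\<Sum>k\<le>l. real (l choose k) * real (path_count {i} k x) * c ^ (l - k))"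
    using path_count_le_block[OF fin, of "{i}" l x] i unfolding c_def by simp
  also have "\<dots> = (\<Sum>k\<le>l. w k * f k * 1)"
    by (intro sum.cong refl) (simp add: w_def f_def)
  finally have "real (path_count I l x)^2 \<le> (\<Sum>k\<le>l. w k * f k * 1)^2"
    by (rule power_mono) simp
  also have "\<dots> \<le> (\<Sum>k\<le>l. w k * (f k)^2) * (\<Sum>k\<le>l. w k * 1^2)"
    by (rule weighted_Cauchy_Schwarz) (rule w0)
  also have "(\<Sum>k\<le>l. w k * 1^2) = (2 + c) ^ l"
    unfolding w_def using binomial_sum_real[of l 2 c] by simp
  also have "(\<Sum>k\<le>l. w k * (f k)^2) \<le> (\<Sum>k\<le>l. w k * (2 / (real k + 1)))"
    by (rule sum_mono) (rule f_sq)
  also have "\<dots> = 2 * (\<Sum>k\<le>l. real (l choose k) * 2 ^ k * c ^ (l - k) / (real k + 1))"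
    unfolding sum_distrib_left by (rule sum.cong[OF refl]) (simp add: w_def)
  also have "\<dots> \<le> 2 * ((2 + c) ^ (l + 1) / ((real l + 1) * 2))"
    using binomial_sum_div_Suc[of 2 c l] c0 by simp
  also have "\<dots> = (2 + c) ^ (l + 1) / (real l + 1)"
    by (simp add: field_simps)
  finally have "real (path_count I l x)^2 \<le> (2 + c) ^ (l + 1) / (real l + 1) * (2 + c) ^ l"
    using c0 by (simp add: mult_right_mono)
  also have "\<dots> = (2 + c) ^ (2 * l + 1) / (real l + 1)"
    by (simp add: power_add[symmetric] mult_2)
  finally show ?thesis unfolding D by (simp add: field_simps)
qed

lemma path_count_two_coords_bound:
  assumes fin: "finite I" and sub: "{i, i'} \<subseteq> I" and ne: "i \<noteq> i'"
  shows "real (path_count I j x) * (real j + 1) \<le> real (card I) * (2 * real (card I)) ^ j"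
proof -
  define b where "b = 2 * real (card (I - {i, i'}))"
  have b0: "b \<ge> 0" unfolding b_def by simp
  have D: "4 + b = 2 * real (card I)" unfolding b_def using card_Diff_real[OF fin sub] ne by simp
  have pair: "real (path_count {i, i'} m x) \<le> 2 * 4 ^ m / (real m + 1)" for m
    using path_count_pair_bound[OF ne, of m x] by (simp add: field_simps)
  have "real (path_count I j x)
      \<le> (\<Sum>m\<le>j. real (j choose m) * real (path_count {i, i'} m x) * b ^ (j - m))"
    using path_count_le_block[OF fin sub, of j x] unfolding b_def .
  also have "\<dots> \<le> (\<Sum>m\<le>j. real (j choose m) * (2 * 4 ^ m / (real m + 1)) * b ^ (j - m))"
    using b0 pair by (intro sum_mono mult_right_mono mult_left_mono) auto
  also have "\<dots> = 2 * (\<Sum>m\<le>j. real (j choose m) * 4 ^ m * b ^ (j - m) / (real m + 1))"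
    by (simp add: sum_distrib_left algebra_simps)
  also have "\<dots> \<le> 2 * ((4 + b) ^ (j + 1) / ((real j + 1) * 4))"
    using binomial_sum_div_Suc[of 4 b j] b0 by simp
  also have "\<dots> = real (card I) * (2 * real (card I)) ^ j / (real j + 1)"
    unfolding D by (simp add: field_simps)
  finally show ?thesis by (simp add: field_simps)
qed

text \<open>The two factors in the Cauchy-Schwarz estimate for three coordinates: the planar block
  \<open>{i, i'}\<close> and the remaining block \<open>J\<close>.\<close>
lemma pair_block_weighted_sum:
  assumes ne: "i \<noteq> i'" and b0: "b \<ge> 0"
  shows "(\<Sum>m\<le>j. real (j choose m) * 4 ^ m * b ^ (j - m) * (real (path_count {i, i'} m x) / 4 ^ m)^2)
         \<le> (4 + b) ^ (j + 2) / (2 * (real j + 1) * (real j + 2))"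
proof -
  have sq: "(real (path_count {i, i'} m x) / 4 ^ m)^2 \<le> 8 / ((real m + 1) * (real m + 2))" for m
  proof -
    have "real (path_count {i, i'} m x) / 4 ^ m \<le> 2 / (real m + 1)"
      using path_count_pair_bound[OF ne, of m x] by (simp add: field_simps)
    then have "(real (path_count {i, i'} m x) / 4 ^ m)^2 \<le> (2 / (real m + 1))^2"
      by (rule power_mono) simp
    also have "\<dots> \<le> 8 / ((real m + 1) * (real m + 2))"
      by (simp add: power2_eq_square divide_simps algebra_simps)
    finally show ?thesis .
  qed
  have "(\<Sum>m\<le>j. real (j choose m) * 4 ^ m * b ^ (j - m) * (real (path_count {i, i'} m x) / 4 ^ m)^2)
      \<le> (\<Sum>m\<le>j. real (j choose m) * 4 ^ m * b ^ (j - m) * (8 / ((real m + 1) * (real m + 2))))"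
    using b0 sq by (intro sum_mono mult_left_mono) auto
  also have "\<dots> = 8 * (\<Sum>m\<le>j. real (j choose m) * 4 ^ m * b ^ (j - m) / ((real m + 1) * (real m + 2)))"
    unfolding sum_distrib_left by (rule sum.cong[OF refl]) simp
  also have "\<dots> \<le> 8 * ((4 + b) ^ (j + 2) / ((real j + 1) * (real j + 2) * 4 ^ 2))"
    by (rule mult_left_mono[OF binomial_sum_div_Suc2]) (use b0 in auto)
  also have "\<dots> = (4 + b) ^ (j + 2) / (2 * (real j + 1) * (real j + 2))"
  proof -
    have "8 * (X / (A * 4 ^ 2)) = X / (2 * A)" for X A :: real
      by (cases "A = 0") (simp_all add: field_simps)
    from this[of "(4 + b) ^ (j + 2)" "(real j + 1) * (real j + 2)"] show ?thesis
      by (simp only: mult.assoc)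
  qed
  finally show ?thesis .
qed

lemma rest_block_weighted_sum:
  assumes fin: "finite J" and i: "i \<in> J" and b: "b = 2 * real (card J)"
  shows "(\<Sum>m\<le>j. real (j choose m) * 4 ^ m * b ^ (j - m) * (real (path_count J (j - m) x) / b ^ (j - m))^2)
         \<le> (4 + b) ^ (j + 1) / (real j + 1)"
proof -
  have b0: "b > 0" using b fin i card_gt_0_iff by fastforce
  have sq: "(real (path_count J l x) / b ^ l)^2 \<le> b / (real l + 1)" for l
  proof -
    have "(real (path_count J l x) / b ^ l)^2 = real (path_count J l x)^2 / b ^ (2 * l)"
      by (simp add: power_divide power_mult[symmetric] mult.commute)
    also have "\<dots> \<le> (b ^ (2 * l + 1) / (real l + 1)) / b ^ (2 * l)"
      using path_count_sq_bound[OF fin i, of l x] b0 unfolding b[symmetric]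
      by (intro divide_right_mono) (simp_all add: field_simps)
    also have "\<dots> = b / (real l + 1)"
    proof -
      have "b ^ (n + 1) / L / b ^ n = b / L" for n and L :: real
        using b0 by (cases "L = 0") (simp_all add: field_simps)
      then show ?thesis .
    qed
    finally show ?thesis .
  qed
  have "(\<Sum>m\<le>j. real (j choose m) * 4 ^ m * b ^ (j - m) * (real (path_count J (j - m) x) / b ^ (j - m))^2)
      \<le> (\<Sum>m\<le>j. real (j choose m) * 4 ^ m * b ^ (j - m) * (b / (real (j - m) + 1)))"
    using b0 by (intro sum_mono mult_left_mono sq) auto
  also have "\<dots> = b * (\<Sum>m\<le>j. real (j choose m) * 4 ^ m * b ^ (j - m) / (real (j - m) + 1))"
    unfolding sum_distrib_left by (rule sum.cong[OF refl]) simp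
  also have "\<dots> \<le> b * ((4 + b) ^ (j + 1) / ((real j + 1) * b))"
    using binomial_sum_div_Suc_rev[of 4 b j] b0 by (intro mult_left_mono) auto
  also have "\<dots> = (4 + b) ^ (j + 1) / (real j + 1)"
    using b0 by simp
  finally show ?thesis .
qed

lemma three_coords_arith:
  fixes D :: real
  assumes "D > 0"
  shows "(D ^ (j + 2) / (2 * (real j + 1) * (real j + 2))) * (D ^ (j + 1) / (real j + 1)) * (real j + 1)^3
         \<le> D ^ (2 * j) * D ^ 3 / 2"
proof -
  have cancel: "(A / (2 * J * K)) * (B / J) * J ^ 3 = A * B / 2 * (J / K)"
    if "J > 0" "K > 0" for A B J K :: real
    using that by (simp add: field_simps power3_eq_cube)
  have "(j + 2) + (j + 1) = 2 * j + 3" by simp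
  then have powers: "D ^ (j + 2) * D ^ (j + 1) = D ^ (2 * j) * D ^ 3"
    by (simp only: power_add[symmetric])
  have "(D ^ (j + 2) / (2 * (real j + 1) * (real j + 2))) * (D ^ (j + 1) / (real j + 1)) * (real j + 1)^3
      = D ^ (2 * j) * D ^ 3 / 2 * ((real j + 1) / (real j + 2))"
    unfolding powers[symmetric] by (rule cancel) auto
  also have "\<dots> \<le> D ^ (2 * j) * D ^ 3 / 2"
    using assms by (intro mult_left_le) auto
  finally show ?thesis .
qed

text \<open>Three coordinates in \<open>I\<close>: \<open>path_count I j x \<le> 2 |I|\<^sup>3\<^sup>/\<^sup>2 (2|I|)\<^sup>j / (j + 1)\<^sup>3\<^sup>/\<^sup>2\<close>, by Cauchy-Schwarz
  on the convolution of the planar block \<open>{i, i'}\<close> with the rest.\<close>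
lemma path_count_three_coords_bound:
  assumes fin: "finite I" and sub: "{i, i', i''} \<subseteq> I" and ne: "i \<noteq> i'" "i'' \<noteq> i" "i'' \<noteq> i'"
  shows "real (path_count I j x)^2 * (real j + 1)^3 \<le> 4 * real (card I)^3 * (2 * real (card I)) ^ (2 * j)"
proof -
  define J where "J = I - {i, i'}"
  define b where "b = 2 * real (card J)"
  define D where "D = 2 * real (card I)"
  have finJ: "finite J" and i'': "i'' \<in> J" unfolding J_def using fin sub ne by auto
  have b0: "b > 0" unfolding b_def using finJ i'' card_gt_0_iff by fastforce
  have D: "4 + b = D" unfolding b_def D_def J_def using card_Diff_real[OF fin, of "{i, i'}"] sub ne by simp
  define w where "w m = real (j choose m) * 4 ^ m * b ^ (j - m)" for m
  define f where "f m = real (path_count {i, i'} m x) / 4 ^ m" for m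
  define g where "g m = real (path_count J (j - m) x) / b ^ (j - m)" for m
  have "I = {i, i'} \<union> J" unfolding J_def using sub by blast
  then have "real (path_count I j x)
      = (\<Sum>m\<le>j. real (j choose m) * real (path_count {i, i'} m x) * real (path_count J (j - m) x))"
    using path_count_convolution_real[of "{i, i'}" J j x] finJ unfolding J_def by simp
  also have "\<dots> = (\<Sum>m\<le>j. w m * f m * g m)"
    by (intro sum.cong refl) (use b0 in \<open>simp add: w_def f_def g_def\<close>)
  finally have "real (path_count I j x)^2 = (\<Sum>m\<le>j. w m * f m * g m)^2" by simp
  also have "\<dots> \<le> (\<Sum>m\<le>j. w m * (f m)^2) * (\<Sum>m\<le>j. w m * (g m)^2)"
    by (rule weighted_Cauchy_Schwarz) (use b0 in \<open>simp add: w_def\<close>)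
  also have "\<dots> \<le> (D ^ (j + 2) / (2 * (real j + 1) * (real j + 2))) * (D ^ (j + 1) / (real j + 1))"
    using pair_block_weighted_sum[OF ne(1), of b j x] rest_block_weighted_sum[OF finJ i'' b_def, of j x]
      b0 unfolding w_def f_def g_def D[symmetric]
    by (intro mult_mono) (auto intro!: sum_nonneg)
  finally have "real (path_count I j x)^2 * (real j + 1)^3
      \<le> (D ^ (j + 2) / (2 * (real j + 1) * (real j + 2))) * (D ^ (j + 1) / (real j + 1)) * (real j + 1)^3"
    by (rule mult_right_mono) simp
  also have "\<dots> \<le> D ^ (2 * j) * D ^ 3 / 2"
    by (rule three_coords_arith) (use b0 D in simp)
  also have "\<dots> = 4 * real (card I)^3 * (2 * real (card I)) ^ (2 * j)"
    unfolding D_def by (simp add: power_mult_distrib)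
  finally show ?thesis .
qed

lemma visit_prob_le:
  assumes "\<And>x. real (hit_count d j x) \<le> B * (2 * real d) ^ j" and "d \<ge> 1"
  shows "visit_prob d j \<le> 2 * B"
proof -
  have "visit_prob d j \<le> (B * (2 * real d) ^ j + B * (2 * real d) ^ j) / (2 * real d) ^ j"
    unfolding visit_prob_def by (intro divide_right_mono add_mono assms(1)) simp
  also have "\<dots> = 2 * B" using assms(2) by simp
  finally show ?thesis .
qed

lemma visit_prob_le_planar:
  assumes d: "d \<ge> 2"
  shows "visit_prob d j \<le> 2 * real d / (real j + 1)"
proof -
  have "real (hit_count d j x) \<le> real d / (real j + 1) * (2 * real d) ^ j" for x
  proof -
    have "real (hit_count d j x) * (real j + 1) \<le> real (path_count {..<d} j x) * (real j + 1)"
      using hit_count_le_path_count[of d j x] by (intro mult_right_mono) simp_all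
    also have "\<dots> \<le> real d * (2 * real d) ^ j"
      using path_count_two_coords_bound[of "{..<d}" 0 1 j x] d by simp
    finally show ?thesis by (simp add: field_simps)
  qed
  from visit_prob_le[OF this] d show ?thesis by simp
qed

lemma visit_prob_le_spatial:
  assumes d: "d \<ge> 3"
  shows "visit_prob d j \<le> 2 * sqrt (4 * real d ^ 3) / ((real j + 1) * sqrt (real j + 1))"
proof -
  let ?N = "2 * real d"
  have "real (hit_count d j x) \<le> sqrt (4 * real d ^ 3) / ((real j + 1) * sqrt (real j + 1)) * ?N ^ j"
    for x
  proof -
    have "real (hit_count d j x)^2 * (real j + 1)^3 \<le> real (path_count {..<d} j x)^2 * (real j + 1)^3"
      using hit_count_le_path_count[of d j x] by (intro mult_right_mono power_mono) simp_all
    also have "\<dots> \<le> 4 * real d ^ 3 * ?N ^ (2 * j)"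
      using path_count_three_coords_bound[of "{..<d}" 0 1 2 j x] d by simp
    finally have sq: "real (hit_count d j x)^2 * (real j + 1)^3 \<le> 4 * real d ^ 3 * ?N ^ (2 * j)" .
    have "real (hit_count d j x) * ((real j + 1) * sqrt (real j + 1))
        = sqrt (real (hit_count d j x)^2 * (real j + 1)^3)"
      by (simp add: real_sqrt_mult power3_eq_cube real_sqrt_mult_self)
    also have "\<dots> \<le> sqrt (4 * real d ^ 3 * ?N ^ (2 * j))" by (rule real_sqrt_le_mono[OF sq])
    also have "\<dots> = sqrt (4 * real d ^ 3) * ?N ^ j"
      by (simp add: real_sqrt_mult power_mult[symmetric] mult.commute[of 2 j] power_mult)
    finally have "real (hit_count d j x) \<le> sqrt (4 * real d ^ 3) * ?N ^ j / ((real j + 1) * sqrt (real j + 1))"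
      by (subst pos_le_divide_eq) simp_all
    then show ?thesis by simp
  qed
  from visit_prob_le[OF this] d show ?thesis by simp
qed

section \<open>Lower bounds for the escape probability\<close>

text \<open>Late visits are rare: for \<open>T = 4dm\<close>, the terms \<open>j \<in> (T, T + m]\<close> of the last-exit
  decomposition sum to at most \<open>1/2\<close>, since each \<open>P\<^sub>j \<le> 2d/(T + 2)\<close>.\<close>
lemma late_visits_small:
  assumes d: "d \<ge> 2"
  shows "(\<Sum>j = Suc (4 * d * m)..4 * d * m + m. visit_prob d j * escape_prob d (4 * d * m + m - j))
         \<le> 1 / 2"
proof -
  define T where "T = 4 * d * m"
  have late_term: "visit_prob d j * escape_prob d (T + m - j) \<le> 2 * real d / (real T + 2)"
    if "j \<ge> Suc T" for j
  proof -
    have "visit_prob d j * escape_prob d (T + m - j) \<le> visit_prob d j"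
      using escape_prob_le_1[of d] d by (intro mult_left_le visit_prob_nonneg) simp_all
    also have "\<dots> \<le> 2 * real d / (real j + 1)" by (rule visit_prob_le_planar[OF d])
    also have "\<dots> \<le> 2 * real d / (real T + 2)" using that by (intro divide_left_mono) auto
    finally show ?thesis .
  qed
  have "(\<Sum>j = Suc T..T + m. visit_prob d j * escape_prob d (T + m - j))
      \<le> real m * (2 * real d) / (real T + 2)"
    using sum_mono[of "{Suc T..T + m}" _ "\<lambda>_. 2 * real d / (real T + 2)"] late_term by simp
  also have "\<dots> \<le> 1 / 2"
  proof -
    have "real m * (2 * real d) * 2 \<le> real T + 2" unfolding T_def by simp
    then show ?thesis by (simp add: divide_simps)
  qed
  finally show ?thesis unfolding T_def .
qed

text \<open>Step (4): in the last-exit decomposition for \<open>M = 4dm + m\<close>, the late terms contribute at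
  most \<open>1/2\<close> and \<open>f(M - j) \<le> f(m)\<close> in the remaining ones, so \<open>1/2 \<le> f(m) \<Sum>\<^sub>j\<^sub>\<le>\<^sub>M P\<^sub>j\<close>.\<close>
lemma escape_prob_lower:
  assumes d: "d \<ge> 2" and U: "(\<Sum>j\<le>4 * d * m + m. visit_prob d j) \<le> U"
  shows "1 \<le> 2 * (escape_prob d m * U)"
proof -
  define T where "T = 4 * d * m"
  define M where "M = T + m"
  have d1: "d \<ge> 1" using d by simp
  have "1 \<le> (\<Sum>j\<le>M. visit_prob d j * escape_prob d (M - j))" by (rule last_exit_decomposition[OF d1])
  also have "\<dots> = (\<Sum>j\<le>T. visit_prob d j * escape_prob d (M - j))
      + (\<Sum>j = Suc T..T + m. visit_prob d j * escape_prob d (M - j))"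
    unfolding M_def by (rule sum_up_index_split)
  also have "(\<Sum>j = Suc T..T + m. visit_prob d j * escape_prob d (M - j)) \<le> 1 / 2"
    using late_visits_small[OF d, of m] unfolding M_def T_def .
  also have "(\<Sum>j\<le>T. visit_prob d j * escape_prob d (M - j)) \<le> (\<Sum>j\<le>T. visit_prob d j * escape_prob d m)"
    by (intro sum_mono mult_left_mono escape_prob_antimono[OF d1] visit_prob_nonneg)
      (auto simp: M_def)
  also have "\<dots> = escape_prob d m * (\<Sum>j\<le>T. visit_prob d j)"
    by (simp add: sum_distrib_left mult.commute)
  also have "(\<Sum>j\<le>T. visit_prob d j) \<le> (\<Sum>j\<le>M. visit_prob d j)"
    unfolding M_def sum_up_index_split by (simp add: sum_nonneg visit_prob_nonneg)
  also have "\<dots> \<le> U" using U unfolding M_def T_def .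
  finally show ?thesis using escape_prob_nonneg[of d m] by (simp add: mult_left_mono)
qed

text \<open>Partial sums of the harmonic series, via the monotonicity of \<open>H\<^sub>n - ln n\<close>.\<close>
lemma harmonic_sum_le_ln: "(\<Sum>j\<le>M. 1 / (real j + 1)) \<le> 1 + ln (real M + 1)"
proof -
  have "(\<Sum>j\<le>M. 1 / (real j + 1)) = harm (Suc M)"
    unfolding harm_altdef lessThan_Suc_atMost by (simp add: field_simps)
  also have "\<dots> \<le> 1 + ln (real M + 1)"
    using euler_mascheroni_sequence_decreasing[of 1 "Suc M"] by (simp add: harm_expand add.commute)
  finally show ?thesis .
qed

text \<open>The telescoping step behind the bound for \<open>\<Sum> (j + 1)\<^sup>-\<^sup>3\<^sup>/\<^sup>2\<close>, with \<open>a = sqrt(M + 1)\<close>, \<open>c = sqrt(M + 2)\<close>.\<close>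
lemma three_halves_step:
  fixes a c :: real
  assumes a: "a > 0" and c2: "c^2 = a^2 + 1" and c: "c > 0"
  shows "1 / (c^2 * c) \<le> 2 / a - 2 / c"
proof -
  have ac: "a < c" using c2 c by (intro power_less_imp_less_base[of a 2 c]) simp_all
  have "(c - a) * (c + a) = 1" using c2 by (simp add: algebra_simps power2_eq_square)
  then have ca: "c - a = 1 / (c + a)" using a c by (simp add: eq_divide_eq)
  have "2 / a - 2 / c = 2 * (c - a) / (a * c)" using a c by (simp add: field_simps)
  then have diff: "2 / a - 2 / c = 2 / (a * c * (c + a))" unfolding ca by simp
  have "a * (c + a) \<le> c * (c + c)" using ac a by (intro mult_mono) auto
  then have "a * c * (c + a) \<le> c * (c * (c + c))" using c
    by (metis mult.assoc mult.commute mult_left_mono less_imp_le)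
  then have "a * c * (c + a) \<le> 2 * (c^2 * c)" by (simp add: power2_eq_square algebra_simps)
  then have "2 / (2 * (c^2 * c)) \<le> 2 / (a * c * (c + a))"
    by (rule divide_left_mono) (use a c in simp_all)
  then show ?thesis unfolding diff by simp
qed

lemma three_halves_sum:
  "(\<Sum>j\<le>M. 1 / ((real j + 1) * sqrt (real j + 1))) \<le> 3 - 2 / sqrt (real M + 1)"
proof (induction M)
  case 0
  then show ?case by simp
next
  case (Suc M)
  define a where "a = sqrt (real M + 1)"
  define c where "c = sqrt (real M + 2)"
  have "1 / ((real (Suc M) + 1) * sqrt (real (Suc M) + 1)) = 1 / (c^2 * c)"
    unfolding c_def by (simp add: add.commute)
  also have "\<dots> \<le> 2 / a - 2 / c"
    by (rule three_halves_step) (simp_all add: a_def c_def)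
  finally show ?case using Suc.IH unfolding a_def c_def by (simp add: add.commute)
qed

lemma ln_linear_le:
  assumes n: "n \<ge> (2::nat)"
  shows "1 + ln (real (9 * n) + 1) \<le> 7 * ln (real n)"
proof -
  have "ln (real (9 * n) + 1) \<le> ln (16 * real n)" using n by simp
  also have "\<dots> = 4 * ln 2 + ln (real n)"
    using n ln_realpow[of 2 4] by (simp add: ln_mult)
  moreover have "ln 2 \<le> ln (real n)" using n by simp
  ultimately show ?thesis using ln2_ge_two_thirds by linarith
qed

lemma escape_prob_lower_planar:
  assumes n: "n \<ge> 2"
  shows "1 \<le> escape_prob 2 n * (56 * ln (real n))"
proof -
  have "4 * 2 * n + n = 9 * n" by simp
  then have "(\<Sum>j\<le>4 * 2 * n + n. visit_prob 2 j) \<le> (\<Sum>j\<le>9 * n. 4 * (1 / (real j + 1)))"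
    using visit_prob_le_planar[of 2] by (simp only:) (intro sum_mono, simp)
  also have "\<dots> = 4 * (\<Sum>j\<le>9 * n. 1 / (real j + 1))" by (simp only: sum_distrib_left)
  also have "\<dots> \<le> 4 * (1 + ln (real (9 * n) + 1))"
    using harmonic_sum_le_ln[of "9 * n"] by simp
  finally have "1 \<le> 2 * (escape_prob 2 n * (4 * (1 + ln (real (9 * n) + 1))))"
    by (intro escape_prob_lower) simp
  also have "\<dots> \<le> 2 * (escape_prob 2 n * (4 * (7 * ln (real n))))"
    using ln_linear_le[OF n] escape_prob_nonneg by (intro mult_left_mono) auto
  finally show ?thesis by simp
qed

lemma escape_prob_lower_spatial:
  assumes d: "d \<ge> 3"
  shows "1 \<le> escape_prob d m * (12 * sqrt (4 * real d ^ 3))"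
proof -
  let ?K = "sqrt (4 * real d ^ 3)"
  let ?M = "4 * d * m + m"
  have "(\<Sum>j\<le>?M. visit_prob d j) \<le> (\<Sum>j\<le>?M. 2 * ?K * (1 / ((real j + 1) * sqrt (real j + 1))))"
    using visit_prob_le_spatial[OF d] by (intro sum_mono) simp
  also have "\<dots> \<le> 2 * ?K * 3"
    unfolding sum_distrib_left[symmetric]
    using three_halves_sum[of ?M] by (intro mult_left_mono) (auto intro: order.trans)
  finally have "1 \<le> 2 * (escape_prob d m * (2 * ?K * 3))"
    by (intro escape_prob_lower) (use d in simp_all)
  then show ?thesis by simp
qed

lemma expected_boundary_from_escape:
  assumes d: "d \<ge> 1" and a: "a > 0" and esc: "1 \<le> escape_prob d n * a"
  shows "real n / a^2 \<le> expected_boundary d n"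
proof -
  have "1 / a \<le> escape_prob d n" using esc a by (simp add: divide_simps mult.commute)
  then have "(1 / a)^2 \<le> (escape_prob d n)^2" by (rule power_mono) (use a in simp)
  then have "real n * (1 / a)^2 \<le> (real n + 1) * (escape_prob d n)^2"
    by (intro mult_mono) auto
  also have "\<dots> \<le> expected_boundary d n" by (rule expected_boundary_ge_escape[OF d])
  finally show ?thesis by (simp add: power_divide)
qed

theorem mainTheorem4:
  fixes d :: nat
  assumes "d \<ge> 2"
  shows "\<exists>c>0. \<forall>n::nat. n \<ge> 2 \<longrightarrow>
           expected_boundary d n \<ge>
             (if d = 2 then c * real n / (ln (real n))^2 else c * real n)"
proof (cases "d = 2")
  case True
  have "expected_boundary 2 n \<ge> 1 / 56^2 * real n / (ln (real n))^2" if n: "n \<ge> 2" for n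
    using expected_boundary_from_escape[OF _ _ escape_prob_lower_planar[OF n]] n
    by (simp add: power_mult_distrib)
  then show ?thesis using True by (intro exI[of _ "1 / 56^2"]) simp
next
  case False
  then have d: "d \<ge> 3" using assms by simp
  define a where "a = 12 * sqrt (4 * real d ^ 3)"
  have a: "a > 0" unfolding a_def using d by simp
  have "expected_boundary d n \<ge> 1 / a^2 * real n" for n
    using expected_boundary_from_escape[OF _ a escape_prob_lower_spatial[OF d, of n, folded a_def]] d
    by simp
  then show ?thesis using False a by (intro exI[of _ "1 / a^2"]) simp
qed

end
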